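(* Let $\varphi$ be a $\mathcal{COD}[\sigma]$-formula, let $\mathbf d=\langle[{=}(X_1),k_1],\dots,[{=}(X_n),k_n]\rangle$ be a sequence of occurrences of constancy atoms in $\varphi$, and let $F$ be the set of all instantiating functions over $\mathbf d$. Then $\varphi\equiv\bigsqcup_{f\in F}\varphi_f$ (both over causal teams, $\equiv^c$, and over generalized causal teams, $\equiv^g$).
   Context: A signature $\sigma=(\mathrm{Dom},\mathrm{Ran})$: $\mathrm{Dom}$ nonempty finite set of variables, each with nonempty finite range $\mathrm{Ran}(X)$; $\mathbf X=\mathbf x$ abbreviates $X_1=x_1\wedge\dots\wedge X_n=x_n$ ($\mathbf x\in\prod\mathrm{Ran}(X_i)$), inconsistent if it contains $X=x,X=x'$ with $x\ne x'$. $\mathcal{CO}[\sigma]$: $\alpha::=X=x\mid\neg\alpha\mid\alpha\wedge\alpha\mid\alpha\vee\alpha\mid\mathbf X=\mathbf x\;\Box\!\!\rightarrow\alpha$. $\mathcal{COD}[\sigma]$: $\varphi::=X=x\mid{=}(\mathbf X;Y)\mid\neg\alpha\mid\varphi\wedge\varphi\mid\varphi\vee\varphi\mid\mathbf X=\mathbf x\;\Box\!\!\rightarrow\varphi$ ($\alpha\in\mathcal{CO}[\sigma]$); ${=}(Y)$ denotes ${=}(\mathbf X;Y)$ with empty $\mathbf X$ (constancy atom). $\sqcup$ is the global disjunction: $T\models\varphi\sqcup\psi$ iff $T\models\varphi$ or $T\models\psi$. Systems of functions $\mathcal F$: for each $V\in\mathrm{En}(\mathcal F)\subseteq\mathrm{Dom}$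 parents $PA^{\mathcal F}_V\subseteq\mathrm{Dom}\setminus\{V\}$ and $\mathcal F_V:\mathrm{Ran}(PA^{\mathcal F}_V)\to\mathrm{Ran}(V)$; $\mathrm{Ex}(\mathcal F)=\mathrm{Dom}\setminus\mathrm{En}(\mathcal F)$; only recursive (acyclic parent graph). An assignment $s$ is compatible with $\mathcal F$ if $s(V)=\mathcal F_V(s(PA^{\mathcal F}_V))$ for $V\in\mathrm{En}(\mathcal F)$. For consistent $\mathbf X=\mathbf x$: $\mathcal F_{\mathbf X=\mathbf x}$ restricts $\mathcal F$ to $\mathrm{En}(\mathcal F)\setminus\mathbf X$; $s^{\mathcal F}_{\mathbf X=\mathbf x}$: $X_i\mapsto x_i$, $V\mapsto s(V)$ on $\mathrm{Ex}(\mathcal F)\setminus\mathbf X$, $V\mapsto\mathcal F_V(s^{\mathcal F}_{\mathbf X=\mathbf x}(PA^{\mathcal F}_V))$ on $\mathrm{En}(\mathcal F)\setminus\mathbf X$. Causal team $T=(T^-,\mathcal F)$ ($T^-$ compatible assignments; empty team components identified as $\emptyset$); causal subteams $(S^-,\mathcal F)$, $S^-\subseteq T^-$; $T_{\mathbf X=\mathbf x}=(\{s^{\mathcal F}_{\mathbf X=\mathbf x}:s\in T^-\},\mathcal F_{\mathbf X=\mathbf x})$; $\models^c$: $T\models X=x$ iff $s(X)=x$ for all $s\in T^-$; $T\models{=}(\mathbf X;Y)$ iff for all $s,s'\in T^-$, $s(\mathbf X)=s'(\mathbf X)$ implies $s(Y)=s'(Y)$; $T\models\neg\alpha$ iff $(\{s\},\mathcal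 F)\not\models\alpha$ for all $s\in T^-$; $\wedge$ classical; $T\models\varphi\vee\psi$ iff causal subteams $T_1,T_2$ exist with $T_1^-\cup T_2^-=T^-$, $T_1\models\varphi$, $T_2\models\psi$; $T\models\mathbf X=\mathbf x\;\Box\!\!\rightarrow\varphi$ iff $\mathbf X=\mathbf x$ inconsistent or $T_{\mathbf X=\mathbf x}\models\varphi$. Generalized causal team: a set $T$ of compatible pairs $(s,\mathcal F)$; $T^-=\{s:(s,\mathcal F)\in T\}$; $T_{\mathbf X=\mathbf x}=\{(s^{\mathcal F}_{\mathbf X=\mathbf x},\mathcal F_{\mathbf X=\mathbf x}):(s,\mathcal F)\in T\}$; $\models^g$: same clauses except $T\models\neg\alpha$ iff $\{(s,\mathcal F)\}\not\models\alpha$ for all $(s,\mathcal F)\in T$, and $T\models\varphi\vee\psi$ iff $T=T_1\cup T_2$ with $T_1\models\varphi$, $T_2\models\psi$. $\equiv^c$ / $\equiv^g$: satisfied by the same causal / generalized causal teams. $[{=}(X_i),k_i]$ denotes the $k_i$-th occurrence of the subformula ${=}(X_i)$ in $\varphi$ (the listed occurrences are distinct). An instantiating function over $\mathbf d$ is a function $f:\{1,\dots,n\}\to\bigcup_i\mathrm{Ran}(X_i)$ with $f(i)\in\mathrm{Ran}(X_i)$ for each $i$; $\varphi_f$ is the formula obtained from $\varphi$ by replacing, for each $i$, the occurrence $[{=}(X_i),k_i]$ by $X_i=f(i)$. *)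

theory Defs
  imports "HOL-Library.FuncSet"
begin

text \<open>Variables have type 'v, values have type 'a. A signature is a pair (Dom, Ran).
  An antecedent X = x is a list of (variable, value) pairs.\<close>

datatype ('v, 'a) fml =
    Eq 'v 'a
  | Dep "'v list" 'v                 \<comment> \<open>=(X_1..X_m; Y); constancy atom =(Y) is Dep [] Y\<close>
  | Neg "('v, 'a) fml"
  | And "('v, 'a) fml" "('v, 'a) fml"
  | Or  "('v, 'a) fml" "('v, 'a) fml"
  | Cf  "('v \<times> 'a) list" "('v, 'a) fml"

definition signature :: "'v set \<Rightarrow> ('v \<Rightarrow> 'a set) \<Rightarrow> bool" where
  "signature Dom Ran \<longleftrightarrow> finite Dom \<and> Dom \<noteq> {} \<and>
     (\<forall>X\<in>Dom. finite (Ran X) \<and> Ran X \<noteq> {})"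

fun is_CO :: "('v, 'a) fml \<Rightarrow> bool" where
  "is_CO (Eq X x) = True"
| "is_CO (Dep Xs Y) = False"
| "is_CO (Neg a) = is_CO a"
| "is_CO (And a b) = (is_CO a \<and> is_CO b)"
| "is_CO (Or a b) = (is_CO a \<and> is_CO b)"
| "is_CO (Cf xs a) = is_CO a"

fun wf_COD :: "'v set \<Rightarrow> ('v \<Rightarrow> 'a set) \<Rightarrow> ('v, 'a) fml \<Rightarrow> bool" where
  "wf_COD Dom Ran (Eq X x) = (X \<in> Dom \<and> x \<in> Ran X)"
| "wf_COD Dom Ran (Dep Xs Y) = (set Xs \<subseteq> Dom \<and> Y \<in> Dom)"
| "wf_COD Dom Ran (Neg a) = (is_CO a \<and> wf_COD Dom Ran a)"
| "wf_COD Dom Ran (And a b) = (wf_COD Dom Ran a \<and> wf_COD Dom Ran b)"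
| "wf_COD Dom Ran (Or a b) = (wf_COD Dom Ran a \<and> wf_COD Dom Ran b)"
| "wf_COD Dom Ran (Cf xs a) = (xs \<noteq> [] \<and> (\<forall>(X, x)\<in>set xs. X \<in> Dom \<and> x \<in> Ran X) \<and>
                                 wf_COD Dom Ran a)"

definition consistent :: "('v \<times> 'a) list \<Rightarrow> bool" where
  "consistent xs \<longleftrightarrow> (\<forall>(X, x)\<in>set xs. \<forall>(Y, y)\<in>set xs. X = Y \<longrightarrow> x = y)"

record ('v, 'a) sysf =
  En :: "'v set"
  PA :: "'v \<Rightarrow> 'v set"
  Fn :: "'v \<Rightarrow> ('v \<Rightarrow> 'a) \<Rightarrow> 'a"

text \<open>Assignments over the signature: extensional functions in PiE Dom Ran.
  A function F_V : Ran(PA_V) -> Ran(V) is an extensional function on parent assignments.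
  Only recursive (acyclic) systems.\<close>
definition sysf_wf :: "'v set \<Rightarrow> ('v \<Rightarrow> 'a set) \<Rightarrow> ('v, 'a) sysf \<Rightarrow> bool" where
  "sysf_wf Dom Ran F \<longleftrightarrow>
     En F \<subseteq> Dom \<and>
     (\<forall>V\<in>En F. PA F V \<subseteq> Dom - {V} \<and>
                Fn F V \<in> PiE (PiE (PA F V) Ran) (\<lambda>_. Ran V)) \<and>
     (\<forall>V. V \<notin> En F \<longrightarrow> PA F V = {} \<and> Fn F V = undefined) \<and>
     acyclic {(P, V). V \<in> En F \<and> P \<in> PA F V}"

definition compatible :: "('v, 'a) sysf \<Rightarrow> ('v \<Rightarrow> 'a) \<Rightarrow> bool" where
  "compatible F s \<longleftrightarrow> (\<forall>V\<in>En F. s V = Fn F V (restrict s (PA F V)))"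

definition ivars :: "('v \<times> 'a) list \<Rightarrow> 'v set" where
  "ivars xs = fst ` set xs"

definition ival :: "('v \<times> 'a) list \<Rightarrow> 'v \<Rightarrow> 'a" where
  "ival xs V = the (map_of xs V)"

definition intervene :: "('v, 'a) sysf \<Rightarrow> ('v \<times> 'a) list \<Rightarrow> ('v, 'a) sysf" where
  "intervene F xs =
     \<lparr> En = En F - ivars xs,
       PA = (\<lambda>V. if V \<in> En F - ivars xs then PA F V else {}),
       Fn = (\<lambda>V. if V \<in> En F - ivars xs then Fn F V else undefined) \<rparr>"

text \<open>s^F_{X=x}: the (unique, by recursiveness) assignment satisfying the recursive
  clauses of the definition.\<close>
definition do_assign :: "('v, 'a) sysf \<Rightarrow> ('v \<times> 'a) list \<Rightarrow> ('v \<Rightarrow> 'a) \<Rightarrow> ('v \<Rightarrow> 'a)" where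
  "do_assign F xs s = (THE t. \<forall>V. t V =
      (if V \<in> ivars xs then ival xs V
       else if V \<in> En F then Fn F V (restrict t (PA F V))
       else s V))"

definition causal_team :: "'v set \<Rightarrow> ('v \<Rightarrow> 'a set) \<Rightarrow> ('v \<Rightarrow> 'a) set \<Rightarrow> ('v, 'a) sysf \<Rightarrow> bool" where
  "causal_team Dom Ran T F \<longleftrightarrow> sysf_wf Dom Ran F \<and>
     (\<forall>s\<in>T. s \<in> PiE Dom Ran \<and> compatible F s)"

definition gen_causal_team :: "'v set \<Rightarrow> ('v \<Rightarrow> 'a set) \<Rightarrow> (('v \<Rightarrow> 'a) \<times> ('v, 'a) sysf) set \<Rightarrow> bool" where
  "gen_causal_team Dom Ran T \<longleftrightarrow>
     (\<forall>(s, F)\<in>T. sysf_wf Dom Ran F \<and> s \<in> PiE Dom Ran \<and> compatible F s)"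

fun sat_c :: "('v \<Rightarrow> 'a) set \<Rightarrow> ('v, 'a) sysf \<Rightarrow> ('v, 'a) fml \<Rightarrow> bool" where
  "sat_c T F (Eq X x) = (\<forall>s\<in>T. s X = x)"
| "sat_c T F (Dep Xs Y) = (\<forall>s\<in>T. \<forall>s'\<in>T. (\<forall>X\<in>set Xs. s X = s' X) \<longrightarrow> s Y = s' Y)"
| "sat_c T F (Neg a) = (\<forall>s\<in>T. \<not> sat_c {s} F a)"
| "sat_c T F (And a b) = (sat_c T F a \<and> sat_c T F b)"
| "sat_c T F (Or a b) = (\<exists>T1 T2. T1 \<subseteq> T \<and> T2 \<subseteq> T \<and> T1 \<union> T2 = T \<and> sat_c T1 F a \<and> sat_c T2 F b)"
| "sat_c T F (Cf xs a) = (\<not> consistent xs \<or> sat_c (do_assign F xs ` T) (intervene F xs) a)"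

fun sat_g :: "(('v \<Rightarrow> 'a) \<times> ('v, 'a) sysf) set \<Rightarrow> ('v, 'a) fml \<Rightarrow> bool" where
  "sat_g T (Eq X x) = (\<forall>(s, F)\<in>T. s X = x)"
| "sat_g T (Dep Xs Y) = (\<forall>(s, F)\<in>T. \<forall>(s', F')\<in>T. (\<forall>X\<in>set Xs. s X = s' X) \<longrightarrow> s Y = s' Y)"
| "sat_g T (Neg a) = (\<forall>p\<in>T. \<not> sat_g {p} a)"
| "sat_g T (And a b) = (sat_g T a \<and> sat_g T b)"
| "sat_g T (Or a b) = (\<exists>T1 T2. T = T1 \<union> T2 \<and> sat_g T1 a \<and> sat_g T2 b)"
| "sat_g T (Cf xs a) = (\<not> consistent xs \<or>
      sat_g ((\<lambda>(s, F). (do_assign F xs s, intervene F xs)) ` T) a)"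

text \<open>Positions (paths) of constancy atoms =(Y) in left-to-right (preorder) order.\<close>
fun cpos :: "('v, 'a) fml \<Rightarrow> ('v \<times> nat list) list" where
  "cpos (Eq X x) = []"
| "cpos (Dep Xs Y) = (if Xs = [] then [(Y, [])] else [])"
| "cpos (Neg a) = map (\<lambda>(Y, p). (Y, 0 # p)) (cpos a)"
| "cpos (And a b) = map (\<lambda>(Y, p). (Y, 0 # p)) (cpos a) @ map (\<lambda>(Y, p). (Y, 1 # p)) (cpos b)"
| "cpos (Or a b) = map (\<lambda>(Y, p). (Y, 0 # p)) (cpos a) @ map (\<lambda>(Y, p). (Y, 1 # p)) (cpos b)"
| "cpos (Cf xs a) = map (\<lambda>(Y, p). (Y, 0 # p)) (cpos a)"

definition occs :: "('v, 'a) fml \<Rightarrow> 'v \<Rightarrow> nat list list" where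
  "occs \<phi> X = map snd (filter (\<lambda>(Y, p). Y = X) (cpos \<phi>))"

text \<open>[=(X), k]: the k-th (1-based) occurrence of =(X) in phi.\<close>
definition occ :: "('v, 'a) fml \<Rightarrow> 'v \<Rightarrow> nat \<Rightarrow> nat list" where
  "occ \<phi> X k = occs \<phi> X ! (k - 1)"

definition valid_occ_seq :: "('v, 'a) fml \<Rightarrow> ('v \<times> nat) list \<Rightarrow> bool" where
  "valid_occ_seq \<phi> d \<longleftrightarrow> distinct d \<and>
     (\<forall>(X, k)\<in>set d. 1 \<le> k \<and> k \<le> length (occs \<phi> X))"

fun repl :: "('v, 'a) fml \<Rightarrow> (nat list \<Rightarrow> 'a option) \<Rightarrow> ('v, 'a) fml" where
  "repl (Eq X x) g = Eq X x"
| "repl (Dep Xs Y) g = (case g [] of Some x \<Rightarrow> (if Xs = [] then Eq Y x else Dep Xs Y)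
                                   | None \<Rightarrow> Dep Xs Y)"
| "repl (Neg a) g = Neg (repl a (\<lambda>p. g (0 # p)))"
| "repl (And a b) g = And (repl a (\<lambda>p. g (0 # p))) (repl b (\<lambda>p. g (1 # p)))"
| "repl (Or a b) g = Or (repl a (\<lambda>p. g (0 # p))) (repl b (\<lambda>p. g (1 # p)))"
| "repl (Cf xs a) g = Cf xs (repl a (\<lambda>p. g (0 # p)))"

text \<open>d = <[=(X_1),k_1], ..., [=(X_n),k_n]> is a list of pairs (X_i, k_i); d_i = d ! (i - 1).
  Instantiating functions over d: f : {1..n} -> Union Ran(X_i), f(i) in Ran(X_i).\<close>
definition inst_funs :: "('v \<Rightarrow> 'a set) \<Rightarrow> ('v \<times> nat) list \<Rightarrow> (nat \<Rightarrow> 'a) set" where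
  "inst_funs Ran d = PiE {1..length d} (\<lambda>i. Ran (fst (d ! (i - 1))))"

definition instantiate :: "('v, 'a) fml \<Rightarrow> ('v \<times> nat) list \<Rightarrow> (nat \<Rightarrow> 'a) \<Rightarrow> ('v, 'a) fml" where
  "instantiate \<phi> d f = repl \<phi> (\<lambda>p.
     if \<exists>i\<in>{1..length d}. occ \<phi> (fst (d ! (i - 1))) (snd (d ! (i - 1))) = p
     then Some (f (THE i. i \<in> {1..length d} \<and> occ \<phi> (fst (d ! (i - 1))) (snd (d ! (i - 1))) = p))
     else None)"

end

theory Submission
  imports Defs
begin

(* Replacing an occurrence of =(X) by X = x can only strengthen a formula: X = x entails =(X),
   and every connective of COD is monotone in its COD arguments (negation only applies to
   CO formulas, which contain no dependence atoms).
   Conversely, the satisfaction of phi by a team assigns to each occurrence of =(X) a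
   (split and intervened) subteam on which X is constant, so the occurrence may be replaced by
   X = x for that constant value, or for any x in Ran X if the subteam is empty. Choosing such
   values for all occurrences at once by induction on phi, and keeping those listed in d, yields
   an instantiating function. A causal team (T, F) is the generalized team T \<times> {F}, so only
   generalized teams need to be treated. *)

definition parent_rel :: "('v, 'a) sysf \<Rightarrow> ('v \<times> 'v) set" where
  "parent_rel F = {(P, V). V \<in> En F \<and> P \<in> PA F V}"

lemma wf_parent_rel:
  assumes "finite Dom" and F: "sysf_wf Dom Ran F"
  shows "wf (parent_rel F)"
proof (rule finite_acyclic_wf)
  have "En F \<subseteq> Dom" and "\<forall>V\<in>En F. PA F V \<subseteq> Dom - {V}"
    using F unfolding sysf_wf_def by blast+
  then have "parent_rel F \<subseteq> Dom \<times> Dom" unfolding parent_rel_def by blast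
  then show "finite (parent_rel F)"
    by (rule finite_subset) (simp add: assms(1))
  show "acyclic (parent_rel F)"
    using F unfolding sysf_wf_def parent_rel_def by blast
qed

lemma wf_adm_ex1_fixpoint:
  assumes wf: "wf R" and adm: "adm_wf R G"
  shows "\<exists>!t. t = G t"
proof
  show "wfrec R G = G (wfrec R G)" using wfrec_fixpoint[OF wf adm] .
next
  fix t assume t: "t = G t"
  show "t = wfrec R G"
  proof
    fix x show "t x = wfrec R G x"
    proof (induction x rule: wf_induct[OF wf])
      case (1 x)
      then have "G t x = G (wfrec R G) x"
        using adm unfolding adm_wf_def by blast
      then show ?case
        using t wfrec_fixpoint[OF wf adm] by metis
    qed
  qed
qed

lemma do_assign_unfold:
  assumes "wf (parent_rel F)"
  shows "do_assign F xs s V =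
    (if V \<in> ivars xs then ival xs V
     else if V \<in> En F then Fn F V (restrict (do_assign F xs s) (PA F V))
     else s V)"
proof -
  define G where "G t V = (if V \<in> ivars xs then ival xs V
       else if V \<in> En F then Fn F V (restrict t (PA F V)) else s V)" for t V
  have "adm_wf (parent_rel F) G"
    unfolding adm_wf_def G_def parent_rel_def by (auto intro!: arg_cong[where f = "Fn F _"])
  then have ex1: "\<exists>!t. t = G t" by (rule wf_adm_ex1_fixpoint[OF assms])
  have "do_assign F xs s = (THE t. t = G t)"
    unfolding do_assign_def G_def by (simp add: fun_eq_iff)
  with theI'[OF ex1] have "do_assign F xs s = G (do_assign F xs s)" by simp
  then have "do_assign F xs s V = G (do_assign F xs s) V" by (rule fun_cong)
  then show ?thesis by (simp only: G_def)
qed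

lemma ival_mem:
  assumes "V \<in> ivars xs"
  shows "(V, ival xs V) \<in> set xs"
proof -
  from assms have "map_of xs V \<noteq> None" by (simp add: ivars_def map_of_eq_None_iff)
  then obtain v where "map_of xs V = Some v" by blast
  then show ?thesis by (simp add: ival_def map_of_SomeD)
qed

lemma do_assign_in_Pi:
  assumes "finite Dom" and F: "sysf_wf Dom Ran F"
    and xs: "\<forall>(X, x)\<in>set xs. X \<in> Dom \<and> x \<in> Ran X"
    and s: "s \<in> Pi Dom Ran"
  shows "do_assign F xs s \<in> Pi Dom Ran"
proof -
  have wf: "wf (parent_rel F)" using wf_parent_rel[OF assms(1,2)] .
  have "V \<in> Dom \<longrightarrow> do_assign F xs s V \<in> Ran V" for V
  proof (induction V rule: wf_induct[OF wf])
    case (1 V)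
    show ?case
    proof
      assume V: "V \<in> Dom"
      consider "V \<in> ivars xs" | "V \<notin> ivars xs" "V \<in> En F" | "V \<notin> ivars xs" "V \<notin> En F"
        by blast
      then show "do_assign F xs s V \<in> Ran V"
      proof cases
        case 1
        then show ?thesis using xs ival_mem[OF 1] do_assign_unfold[OF wf] by fastforce
      next
        case 2
        have "PA F V \<subseteq> Dom" and "Fn F V \<in> PiE (PiE (PA F V) Ran) (\<lambda>_. Ran V)"
          using F 2 by (auto simp: sysf_wf_def)
        moreover have "restrict (do_assign F xs s) (PA F V) \<in> PiE (PA F V) Ran"
          using "1.IH" 2 \<open>PA F V \<subseteq> Dom\<close> by (auto simp: parent_rel_def)
        ultimately show ?thesis using 2 do_assign_unfold[OF wf] by (metis PiE_mem)
      next
        case 3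
        then show ?thesis using s V do_assign_unfold[OF wf] by auto
      qed
    qed
  qed
  then show ?thesis by blast
qed

lemma intervene_sysf_wf: "sysf_wf Dom Ran F \<Longrightarrow> sysf_wf Dom Ran (intervene F xs)"
  unfolding sysf_wf_def intervene_def
  by (auto elim!: acyclic_subset)

lemma subset_times_singleton: "A \<subseteq> B \<times> {b} \<Longrightarrow> fst ` A \<times> {b} = A"
  by force

lemma sat_c_iff_sat_g_times: "sat_c T F \<phi> \<longleftrightarrow> sat_g (T \<times> {F}) \<phi>"
proof (induction \<phi> arbitrary: T F)
  case (Or a b)
  show ?case
  proof
    assume "sat_c T F (Or a b)"
    then obtain T1 T2 where "T1 \<union> T2 = T" "sat_c T1 F a" "sat_c T2 F b" by auto
    then have "T \<times> {F} = T1 \<times> {F} \<union> T2 \<times> {F}"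
      and "sat_g (T1 \<times> {F}) a" "sat_g (T2 \<times> {F}) b" using Or.IH by auto
    then show "sat_g (T \<times> {F}) (Or a b)" by (simp only: sat_g.simps) blast
  next
    assume "sat_g (T \<times> {F}) (Or a b)"
    then obtain T1 T2 where T: "T \<times> {F} = T1 \<union> T2" "sat_g T1 a" "sat_g T2 b" by auto
    then have "fst ` T1 \<times> {F} = T1" "fst ` T2 \<times> {F} = T2"
      by (metis Un_upper1 Un_upper2 subset_times_singleton)+
    moreover have "fst ` T1 \<union> fst ` T2 = T"
      using arg_cong[OF T(1), of "image fst"] by (simp add: image_Un)
    ultimately show "sat_c T F (Or a b)"
      using T(2,3) Or.IH[of "fst ` T1" F] Or.IH[of "fst ` T2" F] by (simp only: sat_c.simps) blast
  qed
next
  case (Cf xs a)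
  have "(\<lambda>(s, F). (do_assign F xs s, intervene F xs)) ` (T \<times> {F})
      = do_assign F xs ` T \<times> {intervene F xs}" by auto
  then show ?case by (simp only: sat_c.simps sat_g.simps Cf.IH)
qed auto

lemma sat_g_empty: "sat_g {} \<phi>"
  by (induction \<phi>) auto

lemma map_le_Cons: "g \<subseteq>\<^sub>m g' \<Longrightarrow> (\<lambda>p. g (i # p)) \<subseteq>\<^sub>m (\<lambda>p. g' (i # p))"
  by (auto simp: map_le_def)

lemma sat_g_Eq_imp_Dep: "sat_g T (Eq Y x) \<Longrightarrow> sat_g T (Dep Xs Y)"
  by (simp add: case_prod_beta)

lemma CO_repl: "is_CO \<alpha> \<Longrightarrow> repl \<alpha> g = \<alpha>"
  by (induction \<alpha> arbitrary: g) auto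

lemma CO_cpos: "is_CO \<alpha> \<Longrightarrow> cpos \<alpha> = []"
  by (induction \<alpha>) auto

lemma repl_Map_empty: "repl \<phi> Map.empty = \<phi>"
  by (induction \<phi>) auto

lemma sat_g_repl_antimono:
  assumes "wf_COD Dom Ran \<phi>" and "g \<subseteq>\<^sub>m g'" and "sat_g T (repl \<phi> g')"
  shows "sat_g T (repl \<phi> g)"
  using assms
proof (induction \<phi> arbitrary: T g g')
  case (Dep Xs Y)
  show ?case
  proof (cases "g []")
    case None
    have "repl (Dep Xs Y) g' = Dep Xs Y \<or> (\<exists>x. repl (Dep Xs Y) g' = Eq Y x)"
      by (auto split: option.split)
    with Dep.prems(3) have "sat_g T (Dep Xs Y)" by (metis sat_g_Eq_imp_Dep)
    with None show ?thesis by simp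
  next
    case (Some x)
    with Dep.prems(2) have "g' [] = g []" unfolding map_le_def by (metis domI)
    with Dep.prems(3) show ?thesis by simp
  qed
next
  case (Neg \<alpha>)
  with Neg.prems show ?case by (simp add: CO_repl)
next
  case (And a b)
  show ?case
    using And.IH(1)[OF _ map_le_Cons[OF And.prems(2)]] And.IH(2)[OF _ map_le_Cons[OF And.prems(2)]]
      And.prems(1,3)
    by simp
next
  case (Or a b)
  from Or.prems(3) obtain T1 T2 where T: "T = T1 \<union> T2"
    "sat_g T1 (repl a (\<lambda>p. g' (0 # p)))" "sat_g T2 (repl b (\<lambda>p. g' (1 # p)))" by auto
  have "sat_g T1 (repl a (\<lambda>p. g (0 # p)))" "sat_g T2 (repl b (\<lambda>p. g (1 # p)))"
    using Or.IH(1)[OF _ map_le_Cons[OF Or.prems(2)]] Or.IH(2)[OF _ map_le_Cons[OF Or.prems(2)]]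
      Or.prems(1) T(2,3) by auto
  with T(1) show ?case by (simp only: repl.simps sat_g.simps) blast
next
  case (Cf xs a)
  show ?case using Cf.IH[OF _ map_le_Cons[OF Cf.prems(2)]] Cf.prems(1,3) by auto
qed auto

lemma sat_g_constancy_eq:
  "sat_g T (Dep [] Y) \<Longrightarrow> (s, F) \<in> T \<Longrightarrow> (s', F') \<in> T \<Longrightarrow> s Y = s' Y"
  by (fastforce simp: case_prod_beta)

lemma sat_g_ex_total_instantiation:
  assumes sig: "signature Dom Ran" and "wf_COD Dom Ran \<phi>"
    and "T \<subseteq> Pi Dom Ran \<times> Collect (sysf_wf Dom Ran)" and "sat_g T \<phi>"
  shows "\<exists>h. (\<forall>(Y, p)\<in>set (cpos \<phi>). h p \<in> Ran Y) \<and> sat_g T (repl \<phi> (\<lambda>p. Some (h p)))"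
  using assms(2-)
proof (induction \<phi> arbitrary: T)
  case (Dep Xs Y)
  show ?case
  proof (cases "Xs = []")
    case True
    have Y: "Y \<in> Dom" using Dep.prems(1) by simp
    obtain x where x: "x \<in> Ran Y" "\<forall>(s, F)\<in>T. s Y = x"
    proof (cases "T = {}")
      case True
      moreover have "Ran Y \<noteq> {}" using sig Y by (simp add: signature_def)
      ultimately show ?thesis using that by blast
    next
      case False
      then obtain s0 F0 where s0: "(s0, F0) \<in> T" by auto
      show ?thesis
      proof (rule that)
        show "s0 Y \<in> Ran Y" using s0 Dep.prems(2) Y by blast
        show "\<forall>(s, F)\<in>T. s Y = s0 Y"
          using sat_g_constancy_eq[OF _ _ s0] Dep.prems(3) True by blast
      qed
    qed
    with True show ?thesis by (intro exI[of _ "\<lambda>_. x"]) simp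
  qed (use Dep.prems(3) in simp)
next
  case (Neg \<alpha>)
  with Neg.prems show ?case by (simp add: CO_repl CO_cpos)
next
  case (And a b)
  obtain ha where "\<forall>(Y, p)\<in>set (cpos a). ha p \<in> Ran Y" "sat_g T (repl a (\<lambda>p. Some (ha p)))"
    using And.IH(1)[of T] And.prems by auto
  moreover obtain hb where "\<forall>(Y, p)\<in>set (cpos b). hb p \<in> Ran Y" "sat_g T (repl b (\<lambda>p. Some (hb p)))"
    using And.IH(2)[of T] And.prems by auto
  ultimately show ?case
    by (intro exI[of _ "\<lambda>p. if hd p = 0 then ha (tl p) else hb (tl p)"]) auto
next
  case (Or a b)
  from Or.prems(3) obtain T1 T2 where T: "T = T1 \<union> T2" "sat_g T1 a" "sat_g T2 b" by auto
  obtain ha where "\<forall>(Y, p)\<in>set (cpos a). ha p \<in> Ran Y" "sat_g T1 (repl a (\<lambda>p. Some (ha p)))"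
    using Or.IH(1)[of T1] Or.prems(1,2) T by auto
  moreover obtain hb where "\<forall>(Y, p)\<in>set (cpos b). hb p \<in> Ran Y" "sat_g T2 (repl b (\<lambda>p. Some (hb p)))"
    using Or.IH(2)[of T2] Or.prems(1,2) T by auto
  ultimately show ?case using T(1)
    by (intro exI[of _ "\<lambda>p. if hd p = 0 then ha (tl p) else hb (tl p)"]) auto
next
  case (Cf xs a)
  let ?T' = "(\<lambda>(s, F). (do_assign F xs s, intervene F xs)) ` T"
  \<comment> \<open>for an inconsistent antecedent the empty team still supplies values in the ranges\<close>
  let ?U = "if consistent xs then ?T' else {}"
  have "?T' \<subseteq> Pi Dom Ran \<times> Collect (sysf_wf Dom Ran)"
    using Cf.prems(1,2) sig do_assign_in_Pi intervene_sysf_wf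
    by (fastforce simp: signature_def)
  then have "?U \<subseteq> Pi Dom Ran \<times> Collect (sysf_wf Dom Ran)" by simp
  moreover have "sat_g ?U a"
    using Cf.prems(3) by (simp add: sat_g_empty)
  ultimately obtain ha where
    "\<forall>(Y, p)\<in>set (cpos a). ha p \<in> Ran Y" "sat_g ?U (repl a (\<lambda>p. Some (ha p)))"
    using Cf.IH[of ?U] Cf.prems(1) by auto
  then show ?case by (intro exI[of _ "\<lambda>p. ha (tl p)"]) (auto split: if_splits)
qed simp

definition occ_pos :: "('v, 'a) fml \<Rightarrow> ('v \<times> nat) list \<Rightarrow> nat \<Rightarrow> nat list" where
  "occ_pos \<phi> d i = occ \<phi> (fst (d ! (i - 1))) (snd (d ! (i - 1)))"

lemma distinct_cpos_positions: "distinct (map snd (cpos \<phi>))"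
  by (induction \<phi>) (auto simp: distinct_map inj_on_def case_prod_beta)

lemma occ_in_cpos:
  assumes "1 \<le> k" and "k \<le> length (occs \<phi> X)"
  shows "(X, occ \<phi> X k) \<in> set (cpos \<phi>)"
proof -
  have "occ \<phi> X k \<in> set (occs \<phi> X)" using assms by (simp add: occ_def)
  then show ?thesis by (auto simp: occs_def)
qed

lemma occ_eq_occD:
  assumes k: "1 \<le> k" "k \<le> length (occs \<phi> X)" and k': "1 \<le> k'" "k' \<le> length (occs \<phi> X')"
    and eq: "occ \<phi> X k = occ \<phi> X' k'"
  shows "X = X' \<and> k = k'"
proof -
  have "inj_on snd (set (cpos \<phi>))"
    using distinct_cpos_positions distinct_map by blast
  from inj_onD[OF this _ occ_in_cpos[OF k] occ_in_cpos[OF k']] eq have X: "X = X'" by simp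
  have "distinct (occs \<phi> X)"
    unfolding occs_def using distinct_cpos_positions distinct_map_filter by blast
  then have "k - 1 = k' - 1"
    using eq k k' X by (simp add: occ_def nth_eq_iff_index_eq)
  with k k' X show ?thesis by simp
qed

lemma nth_pred_mem: "i \<in> {1..length xs} \<Longrightarrow> xs ! (i - 1) \<in> set xs"
  by (intro nth_mem) auto

lemma valid_occ_seq_nth:
  assumes "valid_occ_seq \<phi> d" and "i \<in> {1..length d}"
  obtains X k where "d ! (i - 1) = (X, k)" and "1 \<le> k" and "k \<le> length (occs \<phi> X)"
proof -
  obtain X k where Xk: "d ! (i - 1) = (X, k)" by fastforce
  moreover have "(X, k) \<in> set d" using Xk nth_pred_mem[OF assms(2)] by simp
  then have "1 \<le> k \<and> k \<le> length (occs \<phi> X)" using assms(1) by (auto simp: valid_occ_seq_def)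
  ultimately show thesis using that by blast
qed

lemma inj_on_occ_pos:
  assumes "valid_occ_seq \<phi> d"
  shows "inj_on (occ_pos \<phi> d) {1..length d}"
proof (rule inj_onI)
  fix i j assume i: "i \<in> {1..length d}" and j: "j \<in> {1..length d}"
    and eq: "occ_pos \<phi> d i = occ_pos \<phi> d j"
  obtain X k where Xk: "d ! (i - 1) = (X, k)" "1 \<le> k" "k \<le> length (occs \<phi> X)"
    using valid_occ_seq_nth[OF assms i] .
  obtain X' k' where Xk': "d ! (j - 1) = (X', k')" "1 \<le> k'" "k' \<le> length (occs \<phi> X')"
    using valid_occ_seq_nth[OF assms j] .
  have "d ! (i - 1) = d ! (j - 1)"
    using occ_eq_occD[OF Xk(2,3) Xk'(2,3)] eq Xk(1) Xk'(1) by (simp add: occ_pos_def)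
  then have "i - 1 = j - 1"
    using nth_eq_iff_index_eq[of d "i - 1" "j - 1"] assms i j by (auto simp: valid_occ_seq_def)
  with i j show "i = j" by auto
qed

lemma occ_pos_in_cpos:
  assumes "valid_occ_seq \<phi> d" and "i \<in> {1..length d}"
  shows "(fst (d ! (i - 1)), occ_pos \<phi> d i) \<in> set (cpos \<phi>)"
proof -
  obtain X k where "d ! (i - 1) = (X, k)" "1 \<le> k" "k \<le> length (occs \<phi> X)"
    using valid_occ_seq_nth[OF assms] .
  then show ?thesis by (simp add: occ_pos_def occ_in_cpos)
qed

lemma instantiate_eq_repl:
  "instantiate \<phi> d f = repl \<phi> (\<lambda>p. if p \<in> occ_pos \<phi> d ` {1..length d}
     then Some (f (the_inv_into {1..length d} (occ_pos \<phi> d) p)) else None)"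
proof -
  have "p \<in> occ_pos \<phi> d ` {1..length d} \<longleftrightarrow> (\<exists>i\<in>{1..length d}. occ_pos \<phi> d i = p)" for p
    by blast
  then show ?thesis
    unfolding instantiate_def the_inv_into_def occ_pos_def[symmetric] by (simp only:)
qed

lemma sat_g_iff_instantiate:
  assumes sig: "signature Dom Ran" and wf: "wf_COD Dom Ran \<phi>" and d: "valid_occ_seq \<phi> d"
    and T: "T \<subseteq> Pi Dom Ran \<times> Collect (sysf_wf Dom Ran)"
  shows "sat_g T \<phi> \<longleftrightarrow> (\<exists>f\<in>inst_funs Ran d. sat_g T (instantiate \<phi> d f))"
proof
  assume "sat_g T \<phi>"
  then obtain h where h: "\<forall>(Y, p)\<in>set (cpos \<phi>). h p \<in> Ran Y" "sat_g T (repl \<phi> (\<lambda>p. Some (h p)))"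
    using sat_g_ex_total_instantiation[OF sig wf T] by blast
  define f where "f = restrict (\<lambda>i. h (occ_pos \<phi> d i)) {1..length d}"
  have "f \<in> inst_funs Ran d"
    using h(1) occ_pos_in_cpos[OF d] by (fastforce simp: f_def inst_funs_def)
  moreover have "sat_g T (instantiate \<phi> d f)"
  proof -
    have "f (the_inv_into {1..length d} (occ_pos \<phi> d) p) = h p"
      if "p \<in> occ_pos \<phi> d ` {1..length d}" for p
      using that inj_on_occ_pos[OF d] by (auto simp: f_def the_inv_into_f_f)
    then have "(\<lambda>p. if p \<in> occ_pos \<phi> d ` {1..length d}
        then Some (f (the_inv_into {1..length d} (occ_pos \<phi> d) p)) else None) \<subseteq>\<^sub>m (\<lambda>p. Some (h p))"
      by (simp add: map_le_def dom_def)
    from this h(2) show ?thesis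
      unfolding instantiate_eq_repl by (rule sat_g_repl_antimono[OF wf])
  qed
  ultimately show "\<exists>f\<in>inst_funs Ran d. sat_g T (instantiate \<phi> d f)" by blast
next
  assume "\<exists>f\<in>inst_funs Ran d. sat_g T (instantiate \<phi> d f)"
  then obtain f where "sat_g T (instantiate \<phi> d f)" by blast
  then have "sat_g T (repl \<phi> Map.empty)"
    unfolding instantiate_def by (rule sat_g_repl_antimono[OF wf, rotated]) simp
  then show "sat_g T \<phi>" by (simp only: repl_Map_empty)
qed

theorem lemma5p15:
  fixes Dom :: "'v set" and Ran :: "'v \<Rightarrow> 'a set"
    and \<phi> :: "('v, 'a) fml" and d :: "('v \<times> nat) list"
  assumes "signature Dom Ran"
    and "wf_COD Dom Ran \<phi>"
    and "valid_occ_seq \<phi> d"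
  shows "(\<forall>T F. causal_team Dom Ran T F \<longrightarrow>
            (sat_c T F \<phi> \<longleftrightarrow> (\<exists>f\<in>inst_funs Ran d. sat_c T F (instantiate \<phi> d f))))
       \<and> (\<forall>T. gen_causal_team Dom Ran T \<longrightarrow>
            (sat_g T \<phi> \<longleftrightarrow> (\<exists>f\<in>inst_funs Ran d. sat_g T (instantiate \<phi> d f))))"
proof (intro conjI allI impI)
  fix T F assume "causal_team Dom Ran T F"
  then have "T \<times> {F} \<subseteq> Pi Dom Ran \<times> Collect (sysf_wf Dom Ran)"
    by (auto simp: causal_team_def PiE_def)
  then show "sat_c T F \<phi> \<longleftrightarrow> (\<exists>f\<in>inst_funs Ran d. sat_c T F (instantiate \<phi> d f))"
    unfolding sat_c_iff_sat_g_times by (rule sat_g_iff_instantiate[OF assms])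
next
  fix T assume "gen_causal_team Dom Ran T"
  then have "T \<subseteq> Pi Dom Ran \<times> Collect (sysf_wf Dom Ran)"
    by (auto simp: gen_causal_team_def PiE_def)
  then show "sat_g T \<phi> \<longleftrightarrow> (\<exists>f\<in>inst_funs Ran d. sat_g T (instantiate \<phi> d f))"
    by (rule sat_g_iff_instantiate[OF assms])
qed

end
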